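(* Let $q>0$, $k>0$, $D>0$, and let $\bar U=(\bar u,\bar z,\bar y):\mathbb{R}\to\mathbb{R}^3$ be a $C^1$ solution of the traveling-wave system \[ u'=\Big(\tfrac12 u^2-\tfrac12 u_-^2\Big)-(u-u_-)-q(z+Dy),\qquad z'=y,\qquad y'=D^{-1}\big(-y+k\varphi(u)z\big), \] (where $'=\mathrm{d}/\mathrm{d}\xi$) satisfying $\bar z(\xi)\ge 0$ for all $\xi$ and \[ \lim_{\xi\to-\infty}\bar U(\xi)=(u_-,0,0),\qquad \lim_{\xi\to+\infty}\bar U(\xi)=(u_+,1,0), \] where $u_\pm$ satisfy the Rankine–Hugoniot relation $\tfrac12(u_+^2-u_-^2)=u_+-u_-+q$, $u_+<u_{\mathrm{ig}}<u_-$, and the weak-detonation condition $u_+,u_-<1$. Then $\bar u(\xi)\le u_-$ for all $\xi\in\mathbb{R}$, and $\bar u$ is a decreasing (non-increasing) function of $\xi$ on $\mathbb{R}$.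
   Context: This is the rescaled Majda model $u_t-u_x+(u^2/2)_x=u_{xx}+qk\varphi(u)z$, $z_t-z_x=Dz_{xx}-k\varphi(u)z$ (wave speed normalized to $s=1$, viscosity to $1$, flux $f(u)=u^2/2$), whose traveling waves $(\bar u,\bar z)(x-t)$ with $\bar y=\bar z'$ satisfy the displayed ODE system. The ignition function is $\varphi(u)=0$ for $u\le u_{\mathrm{ig}}$ and $\varphi(u)=e^{-E_A/(u-u_{\mathrm{ig}})}$ for $u>u_{\mathrm{ig}}$, with activation energy $E_A>0$ and fixed ignition threshold $u_{\mathrm{ig}}$. A weak detonation is such a connection with $f'(u_\pm)=u_\pm<s=1$. *)

theory Defs
  imports "HOL-Analysis.Analysis"
begin

definition ign :: "real \<Rightarrow> real \<Rightarrow> real \<Rightarrow> real" where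
  "ign EA uig u = (if u \<le> uig then 0 else exp (- EA / (u - uig)))"

end

theory Submission
  imports Defs
begin

text \<open>With \<open>w = z + D y\<close> the system gives \<open>w' = k \<phi>(u) z \<ge> 0\<close> and \<open>w \<rightarrow> 0\<close> at \<open>-\<infinity>\<close>,
  so \<open>w \<ge> 0\<close>. The \<open>u\<close>-equation reads \<open>u' = (u - u\<^sub>-)((u + u\<^sub>-)/2 - 1) - q w\<close>, which is
  negative on every level set \<open>u = c\<close> with \<open>u\<^sub>- < c < 2 - u\<^sub>-\<close> (nonempty as \<open>u\<^sub>- < 1\<close>);
  since \<open>u \<rightarrow> u\<^sub>-\<close> at \<open>-\<infinity>\<close>, \<open>u\<close> can never reach such a level, whence \<open>u \<le> u\<^sub>-\<close>.
  Differentiating once more, \<open>u'' = (u - 1) u' - q w'\<close> with \<open>u < 1\<close> and \<open>w' \<ge> 0\<close>, so \<open>u'\<close>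
  is decreasing wherever it is positive and the same level argument, started from \<open>u' \<rightarrow> 0\<close>,
  gives \<open>u' \<le> 0\<close>.\<close>

lemma first_hitting_point:
  fixes f :: "real \<Rightarrow> real"
  assumes cont: "continuous_on {a..b} f" and "a \<le> b" and "f a < c" and "c \<le> f b"
  obtains p where "a < p" "p \<le> b" "f p = c" "\<And>s. a \<le> s \<Longrightarrow> s < p \<Longrightarrow> f s < c"
proof -
  define A where "A = {a..b} \<inter> f -` {c..}"
  define p where "p = Inf A"
  have "p \<in> A"
    unfolding p_def
  proof (rule closed_contains_Inf)
    show "A \<noteq> {}" using \<open>a \<le> b\<close> \<open>c \<le> f b\<close> unfolding A_def by auto
    show "bdd_below A" unfolding A_def by auto
    show "closed A" unfolding A_def by (intro continuous_closed_preimage cont) auto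
  qed
  hence p: "a \<le> p" "p \<le> b" "c \<le> f p" unfolding A_def by auto
  have below: "f s < c" if "a \<le> s" "s < p" for s
  proof (rule ccontr)
    assume "\<not> f s < c"
    hence "s \<in> A" using that \<open>p \<le> b\<close> unfolding A_def by auto
    hence "p \<le> s" unfolding p_def by (rule cInf_lower) (auto simp: A_def)
    with \<open>s < p\<close> show False by simp
  qed
  have "f p = c"
  proof (rule ccontr)
    assume "f p \<noteq> c"
    have "continuous_on {a..p} f"
      by (rule continuous_on_subset[OF cont]) (use \<open>p \<le> b\<close> in auto)
    then obtain s where "a \<le> s" "s \<le> p" "f s = c"
      using IVT'[of f a c p] \<open>f a < c\<close> \<open>c \<le> f p\<close> \<open>a \<le> p\<close> by auto
    moreover have "s \<noteq> p" using \<open>f s = c\<close> \<open>f p \<noteq> c\<close> by auto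
    ultimately show False using below by force
  qed
  moreover have "a \<noteq> p" using \<open>f a < c\<close> \<open>f p = c\<close> by auto
  ultimately show thesis
    using that[of p] p below by simp
qed

lemma less_level_if_crossings_downward:
  fixes f f' :: "real \<Rightarrow> real"
  assumes der: "\<And>x. (f has_real_derivative f' x) (at x)"
    and lim: "(f \<longlongrightarrow> L) at_bot" and "L < c"
    and crossing: "\<And>p. f p = c \<Longrightarrow> f' p < 0"
  shows "f x < c"
proof (rule ccontr)
  assume "\<not> f x < c"
  obtain N where N: "\<And>s. s \<le> N \<Longrightarrow> f s < c"
    using order_tendstoD(2)[OF lim \<open>L < c\<close>] by (auto simp: eventually_at_bot_linorder)
  define a where "a = min N (x - 1)"
  have "a < x" "f a < c" using N by (auto simp: a_def)
  have "continuous_on {a..x} f"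
    using der by (meson DERIV_isCont continuous_at_imp_continuous_on)
  then obtain p where "a < p" "f p = c" and below: "\<And>s. a \<le> s \<Longrightarrow> s < p \<Longrightarrow> f s < c"
    by (rule first_hitting_point) (use \<open>a < x\<close> \<open>f a < c\<close> \<open>\<not> f x < c\<close> in auto)
  \<comment> \<open>\<open>f' p < 0\<close> puts \<open>f\<close> above \<open>c\<close> just left of the first hitting point \<open>p\<close>.\<close>
  obtain d where "d > 0" and left: "\<And>h. h > 0 \<Longrightarrow> h < d \<Longrightarrow> f p < f (p - h)"
    using DERIV_neg_dec_left[OF der crossing[OF \<open>f p = c\<close>]] by blast
  define h where "h = min (d / 2) (p - a)"
  have "h > 0" "h < d" using \<open>d > 0\<close> \<open>a < p\<close> by (auto simp: h_def)
  hence "c < f (p - h)" using left \<open>f p = c\<close> by simp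
  moreover have "f (p - h) < c" using below \<open>h > 0\<close> by (simp add: h_def)
  ultimately show False by simp
qed

lemma mono_tendsto_at_bot_le:
  fixes f :: "'a::{linorder, no_bot} \<Rightarrow> 'b::linorder_topology"
  assumes "mono f" and "(f \<longlongrightarrow> L) at_bot"
  shows "L \<le> f x"
  by (rule tendsto_upperbound[OF assms(2)])
    (auto simp: eventually_at_bot_linorder intro: monoD[OF assms(1)])

lemma DERIV_nonneg_tendsto_at_bot_le:
  fixes f f' :: "real \<Rightarrow> real"
  assumes der: "\<And>x. (f has_real_derivative f' x) (at x)" and f'_nonneg: "\<And>x. f' x \<ge> 0"
    and lim: "(f \<longlongrightarrow> L) at_bot"
  shows "L \<le> f x"
proof (rule mono_tendsto_at_bot_le[OF _ lim])
  show "mono f"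
  proof (rule monoI)
    fix a b :: real assume "a \<le> b"
    thus "f a \<le> f b"
      by (rule DERIV_nonneg_imp_nondecreasing) (use der f'_nonneg in blast)
  qed
qed

lemma ign_nonneg: "ign EA uig u \<ge> 0"
  by (simp add: ign_def)

lemma traveling_wave_le_left_state:
  fixes u w :: "real \<Rightarrow> real" and q um :: real
  assumes du: "\<And>\<xi>. (u has_real_derivative
              ((u \<xi>)\<^sup>2 / 2 - um\<^sup>2 / 2 - (u \<xi> - um) - q * w \<xi>)) (at \<xi>)"
    and "q \<ge> 0" and w_nonneg: "\<And>\<xi>. w \<xi> \<ge> 0" and "um < 1"
    and lim: "(u \<longlongrightarrow> um) at_bot"
  shows "u \<xi> \<le> um"
proof (rule ccontr)
  assume "\<not> u \<xi> \<le> um"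
  define c where "c = (um + min (u \<xi>) (2 - um)) / 2"
  have c: "um < c" "c < u \<xi>" "c < 2 - um"
    using \<open>\<not> u \<xi> \<le> um\<close> \<open>um < 1\<close> by (auto simp: c_def)
  have "u \<xi> < c"
  proof (rule less_level_if_crossings_downward[OF du lim \<open>um < c\<close>])
    fix p assume "u p = c"
    have "(c - um) * ((c + um) / 2 - 1) < 0"
      using c by (intro mult_pos_neg) auto
    moreover have "q * w p \<ge> 0" using \<open>q \<ge> 0\<close> w_nonneg by simp
    ultimately show "(u p)\<^sup>2 / 2 - um\<^sup>2 / 2 - (u p - um) - q * w p < 0"
      using \<open>u p = c\<close> by (simp add: power2_eq_square field_simps)
  qed
  with c show False by simp
qed

lemma traveling_wave_antimono:
  fixes u w w' :: "real \<Rightarrow> real" and q um :: real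
  assumes du: "\<And>\<xi>. (u has_real_derivative
              ((u \<xi>)\<^sup>2 / 2 - um\<^sup>2 / 2 - (u \<xi> - um) - q * w \<xi>)) (at \<xi>)"
    and dw: "\<And>\<xi>. (w has_real_derivative w' \<xi>) (at \<xi>)" and w'_nonneg: "\<And>\<xi>. w' \<xi> \<ge> 0"
    and "q \<ge> 0" and u_less: "\<And>\<xi>. u \<xi> < 1"
    and lim_u: "(u \<longlongrightarrow> um) at_bot" and lim_w: "(w \<longlongrightarrow> 0) at_bot"
  shows "antimono u"
proof -
  define u' where "u' = (\<lambda>\<xi>. (u \<xi>)\<^sup>2 / 2 - um\<^sup>2 / 2 - (u \<xi> - um) - q * w \<xi>)"
  have du': "(u' has_real_derivative (u \<xi> - 1) * u' \<xi> - q * w' \<xi>) (at \<xi>)" for \<xi>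
  proof -
    have d_square: "((\<lambda>\<xi>. (u \<xi>)\<^sup>2 / 2) has_real_derivative u \<xi> * u' \<xi>) (at \<xi>)"
      using DERIV_cdivide[OF DERIV_power[OF du[of \<xi>], of 2], of 2] by (simp add: u'_def mult.commute)
    have d_linear: "((\<lambda>\<xi>. u \<xi> - um) has_real_derivative u' \<xi>) (at \<xi>)"
      using DERIV_diff[OF du[of \<xi>] DERIV_const[of um]] by (simp add: u'_def)
    have "((\<lambda>\<xi>. (u \<xi>)\<^sup>2 / 2 - um\<^sup>2 / 2 - (u \<xi> - um) - q * w \<xi>) has_real_derivative
        u \<xi> * u' \<xi> - 0 - u' \<xi> - q * w' \<xi>) (at \<xi>)"
      using DERIV_diff[OF DERIV_diff[OF DERIV_diff[OF d_square DERIV_const] d_linear] DERIV_cmult[OF dw]] .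
    hence "(u' has_real_derivative u \<xi> * u' \<xi> - 0 - u' \<xi> - q * w' \<xi>) (at \<xi>)"
      by (simp only: u'_def[symmetric])
    thus ?thesis by (simp add: algebra_simps)
  qed
  have "(u' \<longlongrightarrow> um\<^sup>2 / 2 - um\<^sup>2 / 2 - (um - um) - q * 0) at_bot"
    unfolding u'_def by (intro tendsto_intros lim_u lim_w) simp
  hence lim_u': "(u' \<longlongrightarrow> 0) at_bot" by simp
  have slope_nonpos: "u' \<xi> \<le> 0" for \<xi>
  proof (rule ccontr)
    assume "\<not> u' \<xi> \<le> 0"
    have "u' \<xi> < u' \<xi>"
    proof (rule less_level_if_crossings_downward[OF du' lim_u'])
      show "0 < u' \<xi>" using \<open>\<not> u' \<xi> \<le> 0\<close> by simp
      fix p assume "u' p = u' \<xi>"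
      have "(u p - 1) * u' p < 0"
        using u_less[of p] \<open>u' p = u' \<xi>\<close> \<open>0 < u' \<xi>\<close> by (intro mult_neg_pos) auto
      moreover have "q * w' p \<ge> 0" using \<open>q \<ge> 0\<close> w'_nonneg by simp
      ultimately show "(u p - 1) * u' p - q * w' p < 0" by linarith
    qed
    thus False by simp
  qed
  show ?thesis
  proof (rule antimonoI)
    fix a b :: real assume "a \<le> b"
    thus "u b \<le> u a"
    proof (rule DERIV_nonpos_imp_nonincreasing)
      fix x show "\<exists>y. (u has_real_derivative y) (at x) \<and> y \<le> 0"
        using du[of x] slope_nonpos[of x] unfolding u'_def by blast
    qed
  qed
qed

theorem proposition2p3:
  fixes q k D EA uig um up :: real
    and u z y :: "real \<Rightarrow> real"
  assumes q_pos: "q > 0" and k_pos: "k > 0" and D_pos: "D > 0" and EA_pos: "EA > 0"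
    and du: "\<And>\<xi>. (u has_real_derivative
              ((u \<xi>)\<^sup>2 / 2 - um\<^sup>2 / 2 - (u \<xi> - um) - q * (z \<xi> + D * y \<xi>))) (at \<xi>)"
    and dz: "\<And>\<xi>. (z has_real_derivative y \<xi>) (at \<xi>)"
    and dy: "\<And>\<xi>. (y has_real_derivative ((- y \<xi> + k * ign EA uig (u \<xi>) * z \<xi>) / D)) (at \<xi>)"
    and z_nonneg: "\<And>\<xi>. z \<xi> \<ge> 0"
    and lim_u_m: "(u \<longlongrightarrow> um) at_bot" and lim_z_m: "(z \<longlongrightarrow> 0) at_bot"
    and lim_y_m: "(y \<longlongrightarrow> 0) at_bot"
    and lim_u_p: "(u \<longlongrightarrow> up) at_top" and lim_z_p: "(z \<longlongrightarrow> 1) at_top"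
    and lim_y_p: "(y \<longlongrightarrow> 0) at_top"
    and RH: "(up\<^sup>2 - um\<^sup>2) / 2 = up - um + q"
    and ord: "up < uig" "uig < um"
    and weak: "up < 1" "um < 1"
  shows "(\<forall>\<xi>. u \<xi> \<le> um) \<and> antimono u"
proof -
  define w where "w = (\<lambda>\<xi>. z \<xi> + D * y \<xi>)"
  define w' where "w' = (\<lambda>\<xi>. k * ign EA uig (u \<xi>) * z \<xi>)"
  have dw: "(w has_real_derivative w' \<xi>) (at \<xi>)" for \<xi>
  proof -
    have "(w has_real_derivative y \<xi> + D * ((- y \<xi> + k * ign EA uig (u \<xi>) * z \<xi>) / D)) (at \<xi>)"
      unfolding w_def by (intro DERIV_add DERIV_cmult dz dy)
    thus ?thesis using D_pos by (simp add: w'_def field_simps)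
  qed
  have w'_nonneg: "w' \<xi> \<ge> 0" for \<xi>
    using k_pos z_nonneg ign_nonneg by (simp add: w'_def)
  have lim_w: "(w \<longlongrightarrow> 0) at_bot"
    unfolding w_def using tendsto_add[OF lim_z_m tendsto_mult_right_zero[OF lim_y_m]] by simp
  hence w_nonneg: "w \<xi> \<ge> 0" for \<xi>
    by (rule DERIV_nonneg_tendsto_at_bot_le[OF dw w'_nonneg])
  have du_w: "(u has_real_derivative ((u \<xi>)\<^sup>2 / 2 - um\<^sup>2 / 2 - (u \<xi> - um) - q * w \<xi>)) (at \<xi>)" for \<xi>
    using du by (simp add: w_def)
  have u_le: "u \<xi> \<le> um" for \<xi>
    using traveling_wave_le_left_state[OF du_w _ w_nonneg] q_pos weak lim_u_m by simp
  have u_less: "u \<xi> < 1" for \<xi>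
    using u_le[of \<xi>] weak(2) by linarith
  have "antimono u"
    using traveling_wave_antimono[OF du_w dw w'_nonneg _ u_less lim_u_m lim_w] q_pos by simp
  with u_le show ?thesis by blast
qed

end
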